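(* Let $\Delta\in\mathbb F^{m\times m}$ be a connection matrix with column/row partition $J_0,\dots,J_b$, and let $\widetilde\Delta^0,\dots,\widetilde\Delta^{m-1}$ be produced by the Row Cancellation Algorithm (RCA) applied to $\Delta$. Then: (i) for $r=0,\dots,m-1$, $\widetilde\Delta^r$ is compliant with the allowable sparsity pattern of $\Delta$; (ii) for $r=1,\dots,m-1$, every entry of $\widetilde\Delta^r$ at a primary pivot position of $\widetilde\Delta^r$ is nonzero, and every nonzero entry of $\widetilde\Delta^r$ at a position $(i,j)$ strictly below the $r$-th diagonal either is at a primary pivot position or lies in a column $j$ containing a (unique) primary pivot position $(i',j)$ with $i'>i$; (iii) if $(p-r,p)$ is marked as a primary pivot at iteration $r\le m-2$, then $\widetilde\Delta^s_{p-r,q}=0$ for all $q>p$ and all $s$ with $r+1\le s\le m-1$, and $\widetilde\Delta^s_{p\,\cdot}=0$ (the whole $p$-th row vanishes) for all $s$ with $r+1\le s\le m-1$; (iv) if $(i,j)$ is a primary pivot position of $\widetilde\Delta^{m-1}$, then column $i$ contains no primary pivot position; (v) each row contains at most one primary pivot position of $\widetilde\Delta^{m-1}$.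
   Context: Throughout, $\mathbb F$ is a field and $m\ge1$. $A_{i\cdot}$ is the $i$-th row of $A$. $U^{pq}$ is the $m\times m$ matrix whose only nonzero entry is a $1$ in position $(p,q)$. Superscripts on matrices are indices, not powers. A connection matrix (over $\mathbb F$) is a matrix $\Delta\in\mathbb F^{m\times m}$ together with a partition $\{1,\dots,m\}=J_0\sqcup\cdots\sqcup J_b$ (the column/row partition; the $J_k$ need not consist of consecutive integers) such that $\Delta$ is upper triangular, $\Delta\Delta=0$, and $\Delta_{ij}=0$ unless $i<j$ and $(i,j)\in\bigcup_{k=1}^bJ_{k-1}\times J_k$. This set of positions is the allowable sparsity pattern; a matrix is compliant with it if all its nonzero entries lie in it. For $1\le r\le m-1$ the $r$-th diagonal is $\{(j-r,j):r<j\le m\}$; a position $(i,j)$ is strictly below the $r$-th diagonal if $j-i<r$. Row Cancellation Algorithm (RCA) applied to a connection matrix $\Delta$: set $\widetilde\Delta^0=\widetilde\Delta^1=\Delta$. For $r=1,\dots,m-1$ in turn: (Markup) mark permanently as a primary pivot (marked at iteration $r$) every position $(j-r,j)$ on the $r$-th diagonal with $\widetilde\Delta^r_{j-r,j}\ne0$ such that no position of column $j$ was marked as a primary pivot at an earlier iteration. (Update, only for $r\le m-2$) If no position was marked at iteration $r$, put $\widetilde T^r=I$; otherwise let $j_1<\cdots<j_t$ be the columns of the positions marked at iteration $r$, let $\widetilde T^{r,s}=I-\sum_{q=j_s+1}^m\frac{\widetilde\Delta^r_{j_s-r,q}}{\widetilde\Delta^r_{j_s-r,j_s}}U^{j_sq}$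 and $\widetilde T^r=\widetilde T^{r,1}\cdots\widetilde T^{r,t}$. Set $\widetilde\Delta^{r+1}=(\widetilde T^r)^{-1}\widetilde\Delta^r\widetilde T^r$. The primary pivot positions of $\widetilde\Delta^r$ are the positions marked at iterations $1,\dots,r$. *)

theory Defs
  imports "Jordan_Normal_Form.Matrix"
begin

text \<open>Indices are 0-based: rows/columns of an m x m matrix are 0..m-1.
  The column/row partition J_0,...,J_b is given by a block-label function blk:
  J_k = {i < m. blk i = k}.\<close>

definition allowable :: "nat \<Rightarrow> (nat \<Rightarrow> nat) \<Rightarrow> nat \<Rightarrow> nat \<Rightarrow> bool" where
  "allowable b blk i j \<longleftrightarrow> i < j \<and> (\<exists>k\<in>{1..b}. blk i = k - 1 \<and> blk j = k)"

definition compliant :: "nat \<Rightarrow> (nat \<Rightarrow> nat) \<Rightarrow> 'a::zero mat \<Rightarrow> bool" where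
  "compliant b blk A \<longleftrightarrow>
     (\<forall>i < dim_row A. \<forall>j < dim_col A. A $$ (i,j) \<noteq> 0 \<longrightarrow> allowable b blk i j)"

definition is_partition :: "nat \<Rightarrow> nat \<Rightarrow> (nat \<Rightarrow> nat) \<Rightarrow> bool" where
  "is_partition m b blk \<longleftrightarrow> (\<forall>i<m. blk i \<le> b) \<and> (\<forall>k\<le>b. \<exists>i<m. blk i = k)"

definition connection_matrix :: "nat \<Rightarrow> nat \<Rightarrow> (nat \<Rightarrow> nat) \<Rightarrow> 'a::field mat \<Rightarrow> bool" where
  "connection_matrix m b blk D \<longleftrightarrow>
     D \<in> carrier_mat m m \<and> is_partition m b blk \<and> upper_triangular D \<and>
     D * D = 0\<^sub>m m m \<and> compliant b blk D"

definition matinv :: "nat \<Rightarrow> 'a::field mat \<Rightarrow> 'a mat" where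
  "matinv m A = (THE B. B \<in> carrier_mat m m \<and> A * B = 1\<^sub>m m \<and> B * A = 1\<^sub>m m)"

definition Umat :: "nat \<Rightarrow> nat \<Rightarrow> nat \<Rightarrow> 'a::{zero,one} mat" where
  "Umat m p q = mat m m (\<lambda>(i,k). if i = p \<and> k = q then 1 else 0)"

text \<open>Markup at iteration r: positions (j-r,j) on the r-th diagonal with nonzero entry
  whose column j contains no previously marked primary pivot (P = pivots marked earlier).\<close>
definition rca_markup :: "nat \<Rightarrow> nat \<Rightarrow> 'a::zero mat \<Rightarrow> (nat \<times> nat) set \<Rightarrow> (nat \<times> nat) set" where
  "rca_markup m r D P =
     {(j - r, j) | j. r \<le> j \<and> j < m \<and> D $$ (j - r, j) \<noteq> 0 \<and> (\<forall>i. (i, j) \<notin> P)}"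

text \<open>T^{r,s} for the marked position in column j (row j - r).\<close>
definition rca_Ts :: "nat \<Rightarrow> nat \<Rightarrow> 'a::field mat \<Rightarrow> nat \<Rightarrow> 'a mat" where
  "rca_Ts m r D j =
     foldr (\<lambda>q A. A - (D $$ (j - r, q) / D $$ (j - r, j)) \<cdot>\<^sub>m Umat m j q) [Suc j..<m] (1\<^sub>m m)"

definition rca_T :: "nat \<Rightarrow> nat \<Rightarrow> 'a::field mat \<Rightarrow> (nat \<times> nat) set \<Rightarrow> 'a mat" where
  "rca_T m r D M =
     (if M = {} then 1\<^sub>m m
      else foldr (\<lambda>j A. rca_Ts m r D j * A) (sorted_list_of_set (snd ` M)) (1\<^sub>m m))"

definition rca_update :: "nat \<Rightarrow> nat \<Rightarrow> 'a::field mat \<Rightarrow> (nat \<times> nat) set \<Rightarrow> 'a mat" where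
  "rca_update m r D M = matinv m (rca_T m r D M) * D * rca_T m r D M"

text \<open>rca D r = (tilde Delta^r, primary pivot positions of tilde Delta^r (marked at iterations 1..r),
  positions marked at iteration r).\<close>
fun rca :: "'a::field mat \<Rightarrow> nat \<Rightarrow> 'a mat \<times> (nat \<times> nat) set \<times> (nat \<times> nat) set" where
  "rca D 0 = (D, {}, {})"
| "rca D (Suc r) =
     (let (A, P, M) = rca D r;
          A' = (if r = 0 then A else rca_update (dim_row D) r A M);
          M' = rca_markup (dim_row D) (Suc r) A' P
      in (A', P \<union> M', M'))"

definition rca_mat :: "'a::field mat \<Rightarrow> nat \<Rightarrow> 'a mat" where
  "rca_mat D r = fst (rca D r)"

definition rca_pivots :: "'a::field mat \<Rightarrow> nat \<Rightarrow> (nat \<times> nat) set" where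
  "rca_pivots D r = fst (snd (rca D r))"

definition rca_marked :: "'a::field mat \<Rightarrow> nat \<Rightarrow> (nat \<times> nat) set" where
  "rca_marked D r = snd (snd (rca D r))"

end

theory Submission
  imports Defs "Jordan_Normal_Form.Determinant"
begin

(* The proof is an induction over the iterations of the RCA with a single invariant,
   rca_invariant n A P, describing the matrix A = Delta^n together with the set P of
   positions marked at iterations 1..n-1: A is compliant and squares to zero, the positions
   of P lie strictly above the diagonal and below the n-th diagonal, at most one per row and
   per column, no pivot row index is a pivot column index, each pivot is the last nonzero
   entry of its row, the row indexed by its column vanishes, and every nonzero entry strictly
   below the n-th diagonal sits at or above a pivot of its column.

   The main step (invariant_step) then shows that one update-and-markup iteration
   preserves the invariant; the crucial ingredient (new_column_row_free) uses Delta^2 = 0 to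
   show that the row indexed by a newly marked column contains no pivot. *)


lemma mat_mult_entry:
  assumes "A \<in> carrier_mat m m" "B \<in> carrier_mat m m" "i < m" "j < m"
  shows "(A * B) $$ (i,j) = (\<Sum>k<m. A $$ (i,k) * B $$ (k,j))"
  using assms by (simp add: index_mult_mat scalar_prod_def atLeast0LessThan)

lemma sum_eq_single:
  assumes "finite S" "i \<in> S" "\<And>k. k \<in> S \<Longrightarrow> k \<noteq> i \<Longrightarrow> f k = 0"
  shows "sum f S = f i"
  using sum.mono_neutral_right[of S "{i}" f] assms by auto

lemma square_zero_entry:
  assumes "A \<in> carrier_mat m m" "A * A = 0\<^sub>m m m" "i < m" "j < m"
  shows "(\<Sum>k<m. A $$ (i,k) * A $$ (k,j)) = 0"
  using mat_mult_entry[OF assms(1,1,3,4)] assms by simp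

lemma two_sided_inverse_unique:
  assumes "(T::'a::field mat) \<in> carrier_mat m m" "B \<in> carrier_mat m m" "C \<in> carrier_mat m m"
    "B * T = 1\<^sub>m m" "T * C = 1\<^sub>m m"
  shows "B = C"
proof -
  have "B = B * (T * C)" using assms(2,5) by simp
  also have "\<dots> = (B * T) * C" using assms(1-3) by (simp add: assoc_mult_mat)
  also have "\<dots> = C" using assms(3,4) by simp
  finally show ?thesis .
qed


section \<open>The elementary column operations \<open>T^{r,s}\<close>\<close>

lemma Umat_carrier [simp]: "Umat m p q \<in> carrier_mat m m"
  by (simp add: Umat_def)

lemma Umat_update_carrier:
  "foldr (\<lambda>q A. A - (f q :: 'a::field) \<cdot>\<^sub>m Umat m j q) qs (1\<^sub>m m) \<in> carrier_mat m m"
  by (induction qs) (auto intro!: minus_carrier_mat)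

lemma Umat_update_entry:
  assumes "distinct qs" "x < m" "y < m"
  shows "foldr (\<lambda>q A. A - (f q :: 'a::field) \<cdot>\<^sub>m Umat m j q) qs (1\<^sub>m m) $$ (x,y)
     = (if x = y then 1 else 0) - (if x = j \<and> y \<in> set qs then f y else 0)"
  using assms
proof (induction qs)
  case (Cons q qs)
  have "(foldr (\<lambda>q A. A - f q \<cdot>\<^sub>m Umat m j q) qs (1\<^sub>m m) - f q \<cdot>\<^sub>m Umat m j q) $$ (x,y)
      = foldr (\<lambda>q A. A - f q \<cdot>\<^sub>m Umat m j q) qs (1\<^sub>m m) $$ (x,y)
        - f q * (if x = j \<and> y = q then 1 else 0)"
    using Cons.prems Umat_update_carrier[of f m j qs] by (simp add: Umat_def)
  then show ?case using Cons by auto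
qed simp

definition rca_coeff :: "nat \<Rightarrow> 'a::field mat \<Rightarrow> nat \<Rightarrow> nat \<Rightarrow> 'a" where
  "rca_coeff r D j q = D $$ (j - r, q) / D $$ (j - r, j)"

lemma rca_Ts_carrier [simp]: "rca_Ts m r D j \<in> carrier_mat m m"
  unfolding rca_Ts_def by (rule Umat_update_carrier)

lemma rca_Ts_entry:
  assumes "x < m" "y < m"
  shows "rca_Ts m r D j $$ (x,y)
       = (if x = y then 1 else 0) - (if x = j \<and> j < y then rca_coeff r D j y else 0)"
  unfolding rca_Ts_def using assms by (subst Umat_update_entry) (auto simp: rca_coeff_def)

lemma mult_rca_Ts_entry:
  assumes "B \<in> carrier_mat m m" "i < m" "q < m" "j < m"
  shows "(B * rca_Ts m r D j) $$ (i,q)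
       = B $$ (i,q) - (if j < q then B $$ (i,j) * rca_coeff r D j q else 0)"
proof -
  have "(B * rca_Ts m r D j) $$ (i,q) = (\<Sum>k<m. B $$ (i,k) * rca_Ts m r D j $$ (k,q))"
    using assms by (simp add: mat_mult_entry)
  also have "\<dots> = (\<Sum>k<m. B $$ (i,k) * (if k = q then 1 else 0))
      - (\<Sum>k<m. if k = j \<and> j < q then B $$ (i,k) * rca_coeff r D j q else 0)"
    unfolding sum_subtractf[symmetric] using assms
    by (intro sum.cong) (auto simp: rca_Ts_entry algebra_simps)
  also have "(\<Sum>k<m. B $$ (i,k) * (if k = q then 1 else 0)) = B $$ (i,q)"
    using assms by (subst sum_eq_single[of _ q]) auto
  also have "(\<Sum>k<m. if k = j \<and> j < q then B $$ (i,k) * rca_coeff r D j q else 0)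
      = (if j < q then B $$ (i,j) * rca_coeff r D j q else 0)"
    using assms by (subst sum_eq_single[of _ j]) auto
  finally show ?thesis .
qed

lemma rca_Ts_mult_entry_unchanged:
  assumes "B \<in> carrier_mat m m" "x < m" "y < m"
    and "x \<noteq> j \<or> (y \<le> x \<and> (\<forall>a c. a < m \<longrightarrow> c < a \<longrightarrow> B $$ (a,c) = 0))"
  shows "(rca_Ts m r D j * B) $$ (x,y) = B $$ (x,y)"
proof -
  have "(rca_Ts m r D j * B) $$ (x,y) = (\<Sum>k<m. rca_Ts m r D j $$ (x,k) * B $$ (k,y))"
    using assms by (simp add: mat_mult_entry)
  also have "\<dots> = (\<Sum>k<m. if k = x then B $$ (k,y) else 0)"
    using assms by (intro sum.cong) (auto simp: rca_Ts_entry)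
  also have "\<dots> = B $$ (x,y)" using assms by (subst sum_eq_single[of _ x]) auto
  finally show ?thesis .
qed


abbreviation col_ops :: "nat \<Rightarrow> nat \<Rightarrow> 'a::field mat \<Rightarrow> nat list \<Rightarrow> 'a mat" where
  "col_ops m r D js \<equiv> foldr (\<lambda>j A. rca_Ts m r D j * A) js (1\<^sub>m m)"

lemma col_ops_carrier [simp]: "col_ops m r D js \<in> carrier_mat m m"
proof (induction js)
  case (Cons j js)
  then show ?case using mult_carrier_mat[OF rca_Ts_carrier Cons.IH] by simp
qed simp

lemma col_ops_dims [simp]: "dim_row (col_ops m r D js) = m" "dim_col (col_ops m r D js) = m"
  using carrier_matD[OF col_ops_carrier[of m r D js]] by auto

lemma rca_T_eq_col_ops:
  "finite M \<Longrightarrow> rca_T m r D M = col_ops m r D (sorted_list_of_set (snd ` M))"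
  unfolding rca_T_def by auto

lemma col_ops_row_other:
  assumes "i \<notin> set js" "i < m" "q < m"
  shows "col_ops m r D js $$ (i,q) = (if i = q then 1 else 0)"
  using assms
  by (induction js) (simp_all add: rca_Ts_mult_entry_unchanged[OF col_ops_carrier])

lemma col_ops_lower:
  assumes "x < m" "y < m" "y \<le> x"
  shows "col_ops m r D js $$ (x,y) = (if x = y then 1 else 0)"
  using assms
proof (induction js arbitrary: x y)
  case (Cons j js)
  have "(rca_Ts m r D j * col_ops m r D js) $$ (x,y) = col_ops m r D js $$ (x,y)"
    by (rule rca_Ts_mult_entry_unchanged[OF col_ops_carrier]) (use Cons in auto)
  then show ?case using Cons by simp
qed simp

lemma col_ops_det: "det (col_ops m r D js) = 1"
proof -
  have upper: "upper_triangular (col_ops m r D js)"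
    unfolding upper_triangular_def using col_ops_lower[of _ m _ r D js] by auto
  have "det (col_ops m r D js) = prod_list (diag_mat (col_ops m r D js))"
    by (rule det_upper_triangular[OF upper col_ops_carrier])
  also have "diag_mat (col_ops m r D js) = map (\<lambda>i. 1) [0..<m]"
    unfolding diag_mat_def col_ops_dims by (rule map_cong) (auto simp: col_ops_lower)
  also have "prod_list (map (\<lambda>i. 1::'a) [0..<m]) = 1" by (induction m) auto
  finally show ?thesis .
qed

text \<open>Since the determinant is 1, matinv really is the two-sided inverse.\<close>
lemma matinv_col_ops:
  "matinv m (col_ops m r D js) \<in> carrier_mat m m
   \<and> col_ops m r D js * matinv m (col_ops m r D js) = 1\<^sub>m m
   \<and> matinv m (col_ops m r D js) * col_ops m r D js = 1\<^sub>m m"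
proof -
  let ?T = "col_ops m r D js"
  have "?T \<in> Units (ring_mat TYPE('a) m undefined)"
    by (rule det_non_zero_imp_unit) (auto simp: col_ops_det)
  then obtain B where B: "B \<in> carrier_mat m m" "?T * B = 1\<^sub>m m" "B * ?T = 1\<^sub>m m"
    unfolding Units_def ring_mat_def by auto
  have "matinv m ?T = B"
    unfolding matinv_def
    by (rule the_equality)
      (use B two_sided_inverse_unique[OF col_ops_carrier _ B(1)] in blast)+
  with B show ?thesis by simp
qed

lemma mult_col_ops_Cons:
  assumes "B \<in> carrier_mat m m"
  shows "B * col_ops m r D (j # js) = (B * rca_Ts m r D j) * col_ops m r D js"
  using assms by (simp add: assoc_mult_mat[symmetric, of B m m _ m _ m])

lemma mult_col_ops_append:
  assumes "B \<in> carrier_mat m m"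
  shows "B * col_ops m r D (xs @ ys) = (B * col_ops m r D xs) * col_ops m r D ys"
  using assms
proof (induction xs arbitrary: B)
  case (Cons x xs)
  then show ?case
    using mult_col_ops_Cons[OF Cons.prems, of r D x] mult_col_ops_Cons[OF Cons.prems, of r D x xs]
    by (simp del: foldr.simps)
qed simp

lemma mult_col_ops_row_prefix:
  assumes "B \<in> carrier_mat m m" "i < m" "q < m" "q \<le> L" "\<forall>j\<in>set js. j < m"
    "\<forall>j\<in>set js. j < L \<longrightarrow> B $$ (i,j) = 0"
  shows "(B * col_ops m r D js) $$ (i,q) = B $$ (i,q)"
  using assms
proof (induction js arbitrary: B q)
  case (Cons j js)
  let ?B' = "B * rca_Ts m r D j"
  have B': "?B' \<in> carrier_mat m m" using Cons by auto
  have eq: "?B' $$ (i,q') = B $$ (i,q')" if "q' < m" "q' \<le> L" for q'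
    using Cons that by (auto simp: mult_rca_Ts_entry)
  have "(B * col_ops m r D (j # js)) $$ (i,q) = (?B' * col_ops m r D js) $$ (i,q)"
    using mult_col_ops_Cons[OF Cons.prems(1)] by simp
  also have "\<dots> = ?B' $$ (i,q)" using Cons(1)[OF B'] Cons.prems eq by auto
  finally show ?case using eq Cons by auto
qed simp

lemma mult_col_ops_row:
  assumes "B \<in> carrier_mat m m" "i < m" "q < m" "\<forall>j\<in>set js. j < m"
    "\<forall>j\<in>set js. B $$ (i,j) = 0"
  shows "(B * col_ops m r D js) $$ (i,q) = B $$ (i,q)"
  using mult_col_ops_row_prefix[of B m i q m js r D] assms by auto

lemma compliant_mult_col_ops:
  assumes "B \<in> carrier_mat m m" "compliant b blk B" "\<forall>j\<in>set js. j < m"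
    "\<forall>j\<in>set js. \<forall>q<m. j < q \<and> D $$ (j - r, q) \<noteq> 0
        \<longrightarrow> (\<forall>i. allowable b blk i j \<longrightarrow> allowable b blk i q)"
  shows "compliant b blk (B * col_ops m r D js)"
  using assms
proof (induction js arbitrary: B)
  case (Cons j js)
  let ?B' = "B * rca_Ts m r D j"
  have B': "?B' \<in> carrier_mat m m" using Cons by auto
  have "compliant b blk ?B'"
    unfolding compliant_def
  proof (intro allI impI)
    fix i q assume iq: "i < dim_row ?B'" "q < dim_col ?B'" "?B' $$ (i,q) \<noteq> 0"
    then have i: "i < m" and q: "q < m" using B' by auto
    have e: "?B' $$ (i,q) = B $$ (i,q) - (if j < q then B $$ (i,j) * rca_coeff r D j q else 0)"
      using Cons.prems i q by (auto simp: mult_rca_Ts_entry)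
    show "allowable b blk i q"
    proof (cases "B $$ (i,q) \<noteq> 0")
      case True then show ?thesis using Cons.prems(1,2) i q by (auto simp: compliant_def)
    next
      case False
      then have "j < q" "B $$ (i,j) \<noteq> 0" "rca_coeff r D j q \<noteq> 0"
        using e iq(3) by (auto split: if_splits)
      then have "allowable b blk i j" "D $$ (j - r, q) \<noteq> 0"
        using Cons.prems(1,2,3) i by (auto simp: compliant_def rca_coeff_def)
      then show ?thesis using Cons.prems(4) \<open>j < q\<close> q by auto
    qed
  qed
  then show ?case using Cons B' mult_col_ops_Cons[OF Cons.prems(1)] by simp
qed simp

lemma mult_col_ops_clears_pivot_row:
  assumes A: "A \<in> carrier_mat m m" and sorted: "sorted_wrt (<) js" and j0: "j0 \<in> set js"
    and lt: "\<forall>j\<in>set js. j < m" and i: "i = j0 - r" and nz: "A $$ (i,j0) \<noteq> 0"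
    and left: "\<forall>j\<in>set js. j < j0 \<longrightarrow> A $$ (i,j) = 0" and q: "q < m"
  shows "(A * col_ops m r A js) $$ (i,q) = (if j0 < q then 0 else A $$ (i,q))"
proof -
  obtain xs ys where js: "js = xs @ j0 # ys" using split_list[OF j0] by blast
  have xs: "\<forall>x\<in>set xs. x < j0" and ys: "\<forall>y\<in>set ys. j0 < y"
    using sorted unfolding js by (auto simp: sorted_wrt_append)
  have j0m: "j0 < m" and im: "i < m" using lt j0 i by auto
  let ?B1 = "A * col_ops m r A xs"
  let ?B2 = "?B1 * rca_Ts m r A j0"
  have B1: "?B1 \<in> carrier_mat m m" using A by simp
  have B2: "?B2 \<in> carrier_mat m m" using mult_carrier_mat[OF B1 rca_Ts_carrier] .
  have row_B1: "?B1 $$ (i,q') = A $$ (i,q')" if "q' < m" for q'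
    by (rule mult_col_ops_row[OF A im that]) (use lt left xs js in auto)
  have row_B2: "?B2 $$ (i,q') = (if j0 < q' then 0 else A $$ (i,q'))" if "q' < m" for q'
    using mult_rca_Ts_entry[OF B1 im that j0m] row_B1[OF that] row_B1[OF j0m] nz i
    by (auto simp: rca_coeff_def)
  have "A * col_ops m r A js = ?B2 * col_ops m r A ys"
    unfolding js mult_col_ops_append[OF A] mult_col_ops_Cons[OF B1] ..
  then have "(A * col_ops m r A js) $$ (i,q) = ?B2 $$ (i,q)"
    using mult_col_ops_row[OF B2 im q] lt js ys row_B2 by auto
  then show ?thesis using row_B2 q by simp
qed


text \<open>If row a may meet both columns j and q, then any row i allowed to meet column j is also
  allowed to meet column q > j (all of them lie in consecutive blocks).\<close>
lemma allowable_trans: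
  assumes "allowable b blk a j" "allowable b blk a q" "allowable b blk i j" "j < q"
  shows "allowable b blk i q"
  using assms unfolding allowable_def by force


section \<open>The invariant of the RCA and its preservation\<close>

text \<open>rca_invariant m b blk n A P: the state before the markup of iteration n, where A is
  the current matrix and P the set of positions marked at iterations 1, ..., n - 1.\<close>
definition rca_invariant ::
  "nat \<Rightarrow> nat \<Rightarrow> (nat \<Rightarrow> nat) \<Rightarrow> nat \<Rightarrow> 'a::field mat \<Rightarrow> (nat \<times> nat) set \<Rightarrow> bool" where
  "rca_invariant m b blk n A P \<longleftrightarrow>
     A \<in> carrier_mat m m \<and> compliant b blk A \<and> A * A = 0\<^sub>m m m \<and>
     (\<forall>i j. (i,j) \<in> P \<longrightarrow> i < j \<and> j < i + n \<and> j < m) \<and>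
     (\<forall>i i' j. (i,j) \<in> P \<longrightarrow> (i',j) \<in> P \<longrightarrow> i = i') \<and>
     (\<forall>i j j'. (i,j) \<in> P \<longrightarrow> (i,j') \<in> P \<longrightarrow> j = j') \<and>
     (\<forall>i j i'. (i,j) \<in> P \<longrightarrow> (i',i) \<notin> P) \<and>
     (\<forall>i j. (i,j) \<in> P \<longrightarrow> A $$ (i,j) \<noteq> 0 \<and> (\<forall>q. j < q \<and> q < m \<longrightarrow> A $$ (i,q) = 0)
                         \<and> (\<forall>q<m. A $$ (j,q) = 0)) \<and>
     (\<forall>i j. i < m \<longrightarrow> j < m \<longrightarrow> j < i + n \<longrightarrow> A $$ (i,j) \<noteq> 0 \<longrightarrow> (\<exists>i'. i \<le> i' \<and> (i',j) \<in> P))"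

context
  fixes m b :: nat and blk :: "nat \<Rightarrow> nat" and n :: nat and A :: "'a::field mat"
    and P :: "(nat \<times> nat) set"
  assumes inv: "rca_invariant m b blk n A P" and n_pos: "1 \<le> n"
begin

lemma A_carrier: "A \<in> carrier_mat m m"
  using inv by (simp add: rca_invariant_def)
lemma A_compliant: "compliant b blk A"
  using inv by (simp add: rca_invariant_def)
lemma A_square_zero: "A * A = 0\<^sub>m m m"
  using inv by (simp add: rca_invariant_def)
lemma P_band: "(i,j) \<in> P \<Longrightarrow> i < j \<and> j < i + n \<and> j < m"
  using inv by (simp add: rca_invariant_def)
lemma P_column_unique: "(i,j) \<in> P \<Longrightarrow> (i',j) \<in> P \<Longrightarrow> i = i'"
  using inv unfolding rca_invariant_def by blast
lemma P_row_unique: "(i,j) \<in> P \<Longrightarrow> (i,j') \<in> P \<Longrightarrow> j = j'"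
  using inv unfolding rca_invariant_def by blast
lemma P_row_not_column: "(i,j) \<in> P \<Longrightarrow> (i',i) \<notin> P"
  using inv unfolding rca_invariant_def by blast
lemma P_nonzero: "(i,j) \<in> P \<Longrightarrow> A $$ (i,j) \<noteq> 0"
  using inv unfolding rca_invariant_def by blast
lemma P_row_right: "(i,j) \<in> P \<Longrightarrow> j < q \<Longrightarrow> q < m \<Longrightarrow> A $$ (i,q) = 0"
  using inv unfolding rca_invariant_def by blast
lemma P_column_row: "(i,j) \<in> P \<Longrightarrow> q < m \<Longrightarrow> A $$ (j,q) = 0"
  using inv unfolding rca_invariant_def by blast
lemma P_covers:
  "i < m \<Longrightarrow> j < m \<Longrightarrow> j < i + n \<Longrightarrow> A $$ (i,j) \<noteq> 0 \<Longrightarrow> \<exists>i'. i \<le> i' \<and> (i',j) \<in> P"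
  using inv unfolding rca_invariant_def by blast

abbreviation new_marks :: "(nat \<times> nat) set" where "new_marks \<equiv> rca_markup m n A P"
abbreviation new_cols :: "nat set" where "new_cols \<equiv> snd ` new_marks"
abbreviation new_col_list :: "nat list" where "new_col_list \<equiv> sorted_list_of_set new_cols"
abbreviation Tn :: "'a mat" where "Tn \<equiv> col_ops m n A new_col_list"
abbreviation A_next :: "'a mat" where "A_next \<equiv> rca_update m n A new_marks"

lemma new_marks_iff:
  "(i,j) \<in> new_marks \<longleftrightarrow> n \<le> j \<and> j < m \<and> i = j - n \<and> A $$ (j - n, j) \<noteq> 0 \<and> (\<forall>i. (i,j) \<notin> P)"
  unfolding rca_markup_def by auto

lemma new_cols_iff: "j \<in> new_cols \<longleftrightarrow> (j - n, j) \<in> new_marks"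
proof
  assume "j \<in> new_cols"
  then obtain i where ij: "(i,j) \<in> new_marks" by force
  moreover have "i = j - n" using ij new_marks_iff by blast
  ultimately show "(j - n, j) \<in> new_marks" by simp
qed (rule image_eqI[where x="(j - n, j)"], simp_all)

lemma new_marks_finite: "finite new_marks"
  by (rule finite_subset[of _ "(\<lambda>j. (j - n, j)) ` {..<m}"]) (auto simp: new_marks_iff)

lemma new_col_list_set: "set new_col_list = new_cols"
  using new_marks_finite by simp

lemma new_col_list_bound: "\<forall>j\<in>set new_col_list. j < m"
  using new_col_list_set new_cols_iff new_marks_iff by auto

text \<open>A newly marked column j contains no nonzero entry strictly below the n-th diagonal,
  since such an entry would lie above a pivot of column j.\<close>
lemma new_column_low_zero:
  assumes "j \<in> new_cols" "i < m" "j < i + n" shows "A $$ (i,j) = 0"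
  using P_covers[of i j] assms new_cols_iff new_marks_iff by auto

lemma Tn_inverse:
  "matinv m Tn \<in> carrier_mat m m" "Tn * matinv m Tn = 1\<^sub>m m" "matinv m Tn * Tn = 1\<^sub>m m"
  using matinv_col_ops[of m n A new_col_list] by auto

lemma A_next_eq: "A_next = matinv m Tn * (A * Tn)"
  unfolding rca_update_def rca_T_eq_col_ops[OF new_marks_finite]
  using Tn_inverse A_carrier by (simp add: assoc_mult_mat[of _ m m _ m _ m])

lemma A_next_carrier: "A_next \<in> carrier_mat m m"
  unfolding A_next_eq using Tn_inverse A_carrier by simp

text \<open>Since T^n is the identity outside the rows new_cols, so is its inverse; hence
  conjugation by T^n acts on all other rows as right multiplication by T^n.\<close>
lemma A_next_row:
  assumes "x \<notin> new_cols" "x < m" "y < m"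
  shows "A_next $$ (x,y) = (A * Tn) $$ (x,y)"
proof -
  have inv_row: "matinv m Tn $$ (x,k) = (if x = k then 1 else 0)" if "k < m" for k
  proof -
    have "(if x = k then 1 else 0) = (Tn * matinv m Tn) $$ (x,k)" using Tn_inverse assms that by simp
    also have "\<dots> = (\<Sum>k'<m. Tn $$ (x,k') * matinv m Tn $$ (k',k))"
      by (rule mat_mult_entry[OF col_ops_carrier Tn_inverse(1) assms(2) that])
    also have "\<dots> = (\<Sum>k'<m. if k' = x then matinv m Tn $$ (k',k) else 0)"
      using assms new_col_list_set by (intro sum.cong) (auto simp: col_ops_row_other)
    also have "\<dots> = matinv m Tn $$ (x,k)" using assms by (subst sum_eq_single[of _ x]) auto
    finally show ?thesis by simp
  qed
  have "A_next $$ (x,y) = (\<Sum>k<m. matinv m Tn $$ (x,k) * (A * Tn) $$ (k,y))"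
    unfolding A_next_eq using Tn_inverse A_carrier assms by (intro mat_mult_entry) auto
  also have "\<dots> = (\<Sum>k<m. if k = x then (A * Tn) $$ (k,y) else 0)"
    using inv_row by (intro sum.cong) auto
  also have "\<dots> = (A * Tn) $$ (x,y)" using assms by (subst sum_eq_single[of _ x]) auto
  finally show ?thesis .
qed

lemma A_next_square_zero: "A_next * A_next = 0\<^sub>m m m"
proof -
  have Tc: "Tn \<in> carrier_mat m m" and Ti: "matinv m Tn \<in> carrier_mat m m"
    using Tn_inverse by auto
  have "A_next * A_next = matinv m Tn * (A * ((Tn * matinv m Tn) * (A * Tn)))"
    unfolding A_next_eq using Tc Ti A_carrier by (simp add: assoc_mult_mat[of _ m m _ m _ m])
  also have "\<dots> = matinv m Tn * ((A * A) * Tn)"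
    using Tn_inverse A_carrier Tc by (simp add: assoc_mult_mat[of _ m m _ m _ m])
  finally show ?thesis using A_square_zero Tc Ti by simp
qed

lemma A_Tn_band:
  assumes "i < m" "q < m" "q \<le> i + n" shows "(A * Tn) $$ (i,q) = A $$ (i,q)"
  by (rule mult_col_ops_row_prefix[where L="i+n", OF A_carrier assms new_col_list_bound])
    (use new_column_low_zero new_col_list_set assms in auto)

text \<open>The key consequence of A^2 = 0: if column i is newly marked, then row i contains no
  pivot, old or new.  Otherwise its pivot entry A(i,j) would be the only contribution to
  (A * A)(i - n, j) = A(i - n, i) * A(i,j) \<noteq> 0.\<close>
lemma new_column_row_free:
  assumes i_new: "i \<in> new_cols" and ij: "(i,j) \<in> P \<or> (i,j) \<in> new_marks"
  shows False
proof -
  define i0 where "i0 = i - n"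
  have i0_new: "(i0, i) \<in> new_marks" using i_new new_cols_iff unfolding i0_def by blast
  then have i0: "i = i0 + n" "i < m" "A $$ (i0,i) \<noteq> 0" using new_marks_iff[of i0 i] by auto
  have Aij: "A $$ (i,j) \<noteq> 0" and jm: "j < m" and j_le: "j \<le> i + n"
    using ij P_nonzero[of i j] P_band[of i j] new_marks_iff[of i j] by auto
  have col_j: "i'' \<le> i" if "(i'',j) \<in> P" for i''
    using ij that P_column_unique[of i j i''] new_marks_iff[of i j] by auto
  have "(\<Sum>k<m. A $$ (i0,k) * A $$ (k,j)) = A $$ (i0,i) * A $$ (i,j)"
  proof (rule sum_eq_single)
    fix k assume k: "k \<in> {..<m}" "k \<noteq> i"
    show "A $$ (i0,k) * A $$ (k,j) = 0"
    proof (cases "k < i")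
      case True
      show ?thesis
      proof (cases "A $$ (i0,k) = 0")
        case False
        then obtain i'' where "(i'',k) \<in> P" using P_covers[of i0 k] i0 k True by auto
        then show ?thesis using P_column_row jm by simp
      qed simp
    next
      case False
      show ?thesis
      proof (cases "A $$ (k,j) = 0")
        case nz: False
        then obtain i'' where "k \<le> i''" "(i'',j) \<in> P"
          using P_covers[of k j] k j_le jm False by auto
        then show ?thesis using col_j k False by fastforce
      qed simp
    qed
  qed (use i0 in auto)
  then have "A $$ (i0,i) * A $$ (i,j) = 0"
    using square_zero_entry[OF A_carrier A_square_zero _ jm] i0 by simp
  then show False using Aij i0(3) by simp
qed

lemma A_next_old_column_row:
  assumes "(p',p) \<in> P" "q < m" shows "A_next $$ (p,q) = 0"
proof -
  have "p \<notin> new_cols" "p < m" using assms new_cols_iff new_marks_iff P_band by auto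
  moreover have "(A * Tn) $$ (p,q) = A $$ (p,q)"
    using mult_col_ops_row[OF A_carrier _ assms(2) new_col_list_bound] P_column_row[OF assms(1)]
      new_col_list_bound \<open>p < m\<close> by auto
  ultimately show ?thesis using A_next_row assms P_column_row by simp
qed

text \<open>Old pivot rows are unchanged: they vanish on every newly marked column.\<close>
lemma A_next_old_pivot_row:
  assumes piv: "(p',p) \<in> P" and q: "q < m" shows "A_next $$ (p',q) = A $$ (p',q)"
proof -
  have pm: "p' < m" "p < p' + n" using P_band[OF piv] by auto
  have not_new: "p' \<notin> new_cols" using new_column_row_free piv by blast
  have "A $$ (p',j) = 0" if "j \<in> new_cols" for j
  proof (cases "p < j")
    case True then show ?thesis using P_row_right[OF piv] that new_cols_iff new_marks_iff by auto
  next
    case False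
    moreover have "j \<noteq> p" using that piv new_cols_iff new_marks_iff by auto
    ultimately show ?thesis using new_column_low_zero[OF that pm(1)] pm by simp
  qed
  then have "(A * Tn) $$ (p',q) = A $$ (p',q)"
    using mult_col_ops_row[OF A_carrier pm(1) q new_col_list_bound] new_col_list_set by auto
  then show ?thesis using A_next_row[OF not_new pm(1) q] by simp
qed

lemma A_next_new_pivot_row:
  assumes ij: "(i,j) \<in> new_marks" and q: "q < m"
  shows "A_next $$ (i,q) = (if j < q then 0 else A $$ (i,q))"
proof -
  have h: "n \<le> j" "j < m" "i = j - n" "A $$ (i,j) \<noteq> 0" using new_marks_iff ij by auto
  have not_new: "i \<notin> new_cols" using new_column_row_free ij by blast
  have "j \<in> set new_col_list" using ij new_col_list_set by force
  then have "(A * Tn) $$ (i,q) = (if j < q then 0 else A $$ (i,q))"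
    by (rule mult_col_ops_clears_pivot_row[OF A_carrier strict_sorted_list_of_set _ new_col_list_bound h(3,4)])
      (use h new_column_low_zero new_col_list_set q in auto)
  then show ?thesis using A_next_row[OF not_new _ q] h by simp
qed

text \<open>The rows indexed by newly marked columns vanish: by A_next^2 = 0, the product of the
  new pivot row with A_next sees only the pivot entry times row j.\<close>
lemma A_next_new_column_row:
  assumes j_new: "j \<in> new_cols" and x: "x < m" shows "A_next $$ (j,x) = 0"
proof -
  define i where "i = j - n"
  have ij: "(i,j) \<in> new_marks" and i: "i < m" "j = i + n" "j < m"
    using j_new new_cols_iff new_marks_iff unfolding i_def by auto
  have "(\<Sum>k<m. A_next $$ (i,k) * A_next $$ (k,x)) = A_next $$ (i,j) * A_next $$ (j,x)"
  proof (rule sum_eq_single)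
    fix k assume k: "k \<in> {..<m}" "k \<noteq> j"
    show "A_next $$ (i,k) * A_next $$ (k,x) = 0"
    proof (cases "j < k")
      case True then show ?thesis using A_next_new_pivot_row[OF ij] k by simp
    next
      case False
      show ?thesis
      proof (cases "A_next $$ (i,k) = 0")
        case nz: False
        then obtain i'' where "(i'',k) \<in> P"
          using A_next_new_pivot_row[OF ij, of k] P_covers[of i k] i k False by auto
        then show ?thesis using A_next_old_column_row x by simp
      qed simp
    qed
  qed (use i in auto)
  then have "A_next $$ (i,j) * A_next $$ (j,x) = 0"
    using square_zero_entry[OF A_next_carrier A_next_square_zero i(1) x] by simp
  moreover have "A_next $$ (i,j) \<noteq> 0" using A_next_new_pivot_row[OF ij] i ij new_marks_iff by simp
  ultimately show ?thesis by simp
qed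

text \<open>Compliance: the column operations only subtract a marked column j from columns q
  that are allowed in its pivot row, hence lie in the block after the block of j.\<close>
lemma A_next_compliant: "compliant b blk A_next"
proof -
  have "compliant b blk (A * Tn)"
  proof (rule compliant_mult_col_ops[OF A_carrier A_compliant new_col_list_bound], intro ballI allI impI)
    fix j q i assume j: "j \<in> set new_col_list" and q: "q < m"
      and jq: "j < q \<and> A $$ (j - n, q) \<noteq> 0" and ij: "allowable b blk i j"
    have "j < m" "A $$ (j - n, j) \<noteq> 0"
      using j new_col_list_set new_cols_iff new_marks_iff by auto
    then have "allowable b blk (j - n) j" "allowable b blk (j - n) q"
      using A_compliant A_carrier jq q unfolding compliant_def by auto
    then show "allowable b blk i q" using allowable_trans ij jq by blast
  qed
  moreover have "A_next $$ (i,j) = (A * Tn) $$ (i,j)" if "i < m" "j < m" "A_next $$ (i,j) \<noteq> 0" for i j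
    using A_next_row A_next_new_column_row that by blast
  ultimately show ?thesis
    using A_next_carrier A_carrier unfolding compliant_def by auto
qed

lemma new_pivots_band:
  assumes "(i,j) \<in> P \<union> new_marks" shows "i < j \<and> j < i + Suc n \<and> j < m"
proof (cases "(i,j) \<in> P")
  case True then show ?thesis using P_band by fastforce
next
  case False then show ?thesis using assms new_marks_iff[of i j] n_pos by auto
qed

text \<open>At most one pivot per column: new pivots are only marked in columns without an old one.\<close>
lemma new_pivots_column_unique:
  assumes "(i,j) \<in> P \<union> new_marks" "(i',j) \<in> P \<union> new_marks" shows "i = i'"
proof (cases "(i,j) \<in> P \<and> (i',j) \<in> P")
  case True then show ?thesis using P_column_unique by blast
next
  case False
  then have "(i,j) \<in> new_marks \<and> (i',j) \<in> new_marks"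
    using assms new_marks_iff[of i j] new_marks_iff[of i' j] by blast
  then show ?thesis using new_marks_iff by simp
qed

text \<open>At most one pivot per row: an old pivot row vanishes to the right of its pivot, and the
  new pivots lie on a common diagonal.\<close>
lemma new_pivots_row_unique:
  assumes "(i,j) \<in> P \<union> new_marks" "(i,j') \<in> P \<union> new_marks" shows "j = j'"
proof -
  have old_new: False if "(i,j) \<in> P" "(i,j') \<in> new_marks" for j j'
    using P_band[OF that(1)] P_row_right[OF that(1), of j'] that(2) new_marks_iff[of i j'] by auto
  consider "(i,j) \<in> P" "(i,j') \<in> P" | "(i,j) \<in> new_marks" "(i,j') \<in> new_marks"
    using assms old_new by blast
  then show ?thesis
  proof cases
    case 1 then show ?thesis by (rule P_row_unique)
  next
    case 2 then show ?thesis using new_marks_iff[of i j] new_marks_iff[of i j'] by auto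
  qed
qed

text \<open>No pivot row index is a pivot column index: for new pivot columns this is
  new_column_row_free, for old ones the row indexed by the column vanishes.\<close>
lemma new_pivots_row_not_column:
  assumes ij: "(i,j) \<in> P \<union> new_marks" and i'i: "(i',i) \<in> P \<union> new_marks" shows False
proof (cases "(i',i) \<in> P")
  case True
  show False
  proof (cases "(i,j) \<in> P")
    case True then show False using P_row_not_column \<open>(i',i) \<in> P\<close> by blast
  next
    case False
    then have "A $$ (i,j) \<noteq> 0" "j < m" using ij new_marks_iff[of i j] by auto
    then show False using P_column_row[OF True] by simp
  qed
next
  case False
  then have "i \<in> new_cols" using i'i new_cols_iff new_marks_iff[of i' i] by auto
  then show False using new_column_row_free ij by blast
qed

lemma new_pivot_entries:
  assumes "(i,j) \<in> P \<union> new_marks"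
  shows "A_next $$ (i,j) \<noteq> 0 \<and> (\<forall>q. j < q \<and> q < m \<longrightarrow> A_next $$ (i,q) = 0)
       \<and> (\<forall>q<m. A_next $$ (j,q) = 0)"
proof (cases "(i,j) \<in> P")
  case True
  then show ?thesis using A_next_old_pivot_row A_next_old_column_row P_nonzero P_row_right P_band
    by simp
next
  case False
  then have ij: "(i,j) \<in> new_marks" using assms by simp
  then have "j \<in> new_cols" by force
  then show ?thesis using A_next_new_pivot_row[OF ij] A_next_new_column_row ij new_marks_iff by simp
qed

text \<open>Coverage moves one diagonal up: a nonzero entry on the n-th diagonal either lies above
  an old pivot or is itself newly marked.\<close>
lemma new_pivot_covers:
  assumes ij: "i < m" "j < m" "j < i + Suc n" and nz: "A_next $$ (i,j) \<noteq> 0"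
  shows "\<exists>i'. i \<le> i' \<and> (i',j) \<in> P \<union> new_marks"
proof -
  have "i \<notin> new_cols" using A_next_new_column_row ij nz by blast
  then have Aij: "A $$ (i,j) \<noteq> 0"
    using A_next_row ij A_Tn_band[of i j] nz by simp
  show ?thesis
  proof (cases "j < i + n \<or> (\<exists>i''. (i'',j) \<in> P)")
    case True
    then obtain i' where i': "(i',j) \<in> P" using P_covers[OF ij(1,2) _ Aij] by blast
    have "i \<le> i'"
    proof (cases "j < i + n")
      case True
      then obtain i'' where "i \<le> i''" "(i'',j) \<in> P" using P_covers[OF ij(1,2) _ Aij] by blast
      then show ?thesis using P_column_unique[OF i'] by blast
    next
      case False then show ?thesis using P_band[OF i'] ij(3) by simp
    qed
    then show ?thesis using i' by blast
  next
    case False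
    then have "j = i + n" "\<forall>i''. (i'',j) \<notin> P" using ij by auto
    then have "(i,j) \<in> new_marks" using ij Aij new_marks_iff[of i j] by simp
    then show ?thesis by blast
  qed
qed

lemma invariant_step: "rca_invariant m b blk (Suc n) A_next (P \<union> new_marks)"
  unfolding rca_invariant_def
  using A_next_carrier A_next_compliant A_next_square_zero new_pivots_band
    new_pivots_column_unique new_pivots_row_unique new_pivots_row_not_column
    new_pivot_entries new_pivot_covers
  by blast

end


lemma rca_Suc:
  "rca_mat D (Suc r) = (if r = 0 then rca_mat D r
                        else rca_update (dim_row D) r (rca_mat D r) (rca_marked D r))"
  "rca_marked D (Suc r) = rca_markup (dim_row D) (Suc r) (rca_mat D (Suc r)) (rca_pivots D r)"
  "rca_pivots D (Suc r) = rca_pivots D r \<union> rca_marked D (Suc r)"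
  by (cases "rca D r"; cases r; simp add: rca_mat_def rca_pivots_def rca_marked_def Let_def)+

lemma rca_zero: "rca_mat D 0 = D" "rca_pivots D 0 = {}" "rca_marked D 0 = {}"
  by (simp_all add: rca_mat_def rca_pivots_def rca_marked_def)

lemma rca_pivots_mono: "a \<le> c \<Longrightarrow> rca_pivots D a \<subseteq> rca_pivots D c"
  by (induction c) (auto simp: rca_Suc(3) le_Suc_eq)

lemma rca_marked_subset: "rca_marked D r \<subseteq> rca_pivots D r"
  by (cases r) (auto simp: rca_zero rca_Suc(3))

lemma rca_marked_nonzero: "(i,j) \<in> rca_marked D r \<Longrightarrow> rca_mat D r $$ (i,j) \<noteq> 0"
  by (cases r) (auto simp: rca_zero rca_Suc(2) rca_markup_def)

lemma rca_invariant_holds: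
  assumes cm: "connection_matrix m b blk (D :: 'a::field mat)" and n: "1 \<le> n"
  shows "rca_invariant m b blk n (rca_mat D n) (rca_pivots D (n - 1))"
  using n
proof (induction n rule: dec_induct)
  case base
  have D: "D \<in> carrier_mat m m" "compliant b blk D" "D * D = 0\<^sub>m m m"
    using cm unfolding connection_matrix_def by auto
  have "D $$ (i,j) = 0" if "i < m" "j < m" "j < i + 1" for i j
    using D that unfolding compliant_def allowable_def by fastforce
  then show ?case
    using D rca_Suc(1)[of D 0] unfolding rca_invariant_def by (auto simp: rca_zero)
next
  case (step n)
  obtain k where k: "n = Suc k" using step(1) by (cases n) auto
  have dim: "dim_row D = m" using cm unfolding connection_matrix_def by auto
  show ?case
    using invariant_step[OF step(3) step(1)] rca_Suc[of D n] rca_Suc[of D k] dim k by simp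
qed


lemma rca_compliant:
  assumes "connection_matrix m b blk D" shows "compliant b blk (rca_mat D r)"
  using rca_invariant_holds[OF assms, of r] assms
  by (cases r) (auto simp: rca_invariant_def connection_matrix_def rca_zero)

lemma rca_pivot_nonzero:
  assumes "connection_matrix m b blk D" "1 \<le> r" "(i,j) \<in> rca_pivots D r"
  shows "rca_mat D r $$ (i,j) \<noteq> 0"
proof (cases "(i,j) \<in> rca_marked D r")
  case False
  then have "(i,j) \<in> rca_pivots D (r - 1)" using assms(2,3) rca_Suc(3)[of D "r - 1"] by simp
  then show ?thesis using rca_invariant_holds[OF assms(1,2)] unfolding rca_invariant_def by blast
qed (rule rca_marked_nonzero)

lemma rca_below_diagonal:
  assumes cm: "connection_matrix m b blk D" and r: "1 \<le> r"
    and ij: "i < m" "j < m" "j < i + r" and nz: "rca_mat D r $$ (i,j) \<noteq> 0"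
  shows "(i,j) \<in> rca_pivots D r
       \<or> (\<exists>i'. i' > i \<and> (i',j) \<in> rca_pivots D r \<and> (\<forall>i''. (i'',j) \<in> rca_pivots D r \<longrightarrow> i'' = i'))"
proof -
  obtain i' where i': "i \<le> i'" "(i',j) \<in> rca_pivots D (r - 1)"
    using rca_invariant_holds[OF cm r] ij nz unfolding rca_invariant_def by blast
  then have piv: "(i',j) \<in> rca_pivots D r" using rca_pivots_mono[of "r - 1" r D] by auto
  moreover have "\<forall>i''. (i'',j) \<in> rca_pivots D r \<longrightarrow> i'' = i'"
    using rca_invariant_holds[OF cm, of "Suc r"] piv unfolding rca_invariant_def by auto
  ultimately show ?thesis using i'(1) le_neq_implies_less by blast
qed

lemma rca_marked_rows_vanish:
  assumes cm: "connection_matrix m b blk D" and marked: "(p - r, p) \<in> rca_marked D r"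
    and s: "r + 1 \<le> s"
  shows "(\<forall>q. p < q \<and> q < m \<longrightarrow> rca_mat D s $$ (p - r, q) = 0)
       \<and> (\<forall>q < m. rca_mat D s $$ (p, q) = 0)"
proof -
  have "r \<le> s - 1" using s by simp
  then have "(p - r, p) \<in> rca_pivots D (s - 1)"
    using marked rca_marked_subset[of D r] rca_pivots_mono[of r "s - 1" D] by blast
  then show ?thesis using rca_invariant_holds[OF cm, of s] s unfolding rca_invariant_def by auto
qed

lemma rca_pivot_structure:
  assumes "connection_matrix m b blk D"
  shows "(i,j) \<in> rca_pivots D r \<Longrightarrow> (i',i) \<notin> rca_pivots D r"
    and "(i,j) \<in> rca_pivots D r \<Longrightarrow> (i,j') \<in> rca_pivots D r \<Longrightarrow> j = j'"
  using rca_invariant_holds[OF assms, of "Suc r"] unfolding rca_invariant_def by auto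

theorem mainTheorem11:
  fixes D :: "'a::field mat" and m b :: nat and blk :: "nat \<Rightarrow> nat"
  assumes "m \<ge> 1"
    and "connection_matrix m b blk D"
  shows
    "(\<forall>r < m. compliant b blk (rca_mat D r))
   \<and> (\<forall>r. 1 \<le> r \<and> r \<le> m - 1 \<longrightarrow>
        (\<forall>(i,j) \<in> rca_pivots D r. rca_mat D r $$ (i,j) \<noteq> 0)
      \<and> (\<forall>i < m. \<forall>j < m. j < i + r \<and> rca_mat D r $$ (i,j) \<noteq> 0 \<longrightarrow>
            (i,j) \<in> rca_pivots D r
          \<or> (\<exists>i'. i' > i \<and> (i',j) \<in> rca_pivots D r \<and>
                 (\<forall>i''. (i'',j) \<in> rca_pivots D r \<longrightarrow> i'' = i'))))
   \<and> (\<forall>r p. 1 \<le> r \<and> r \<le> m - 2 \<and> (p - r, p) \<in> rca_marked D r \<longrightarrow>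
        (\<forall>s. r + 1 \<le> s \<and> s \<le> m - 1 \<longrightarrow>
           (\<forall>q. p < q \<and> q < m \<longrightarrow> rca_mat D s $$ (p - r, q) = 0)
         \<and> (\<forall>q < m. rca_mat D s $$ (p, q) = 0)))
   \<and> (\<forall>i j. (i,j) \<in> rca_pivots D (m - 1) \<longrightarrow> (\<nexists>i'. (i', i) \<in> rca_pivots D (m - 1)))
   \<and> (\<forall>i j j'. (i,j) \<in> rca_pivots D (m - 1) \<and> (i,j') \<in> rca_pivots D (m - 1) \<longrightarrow> j = j')"
proof -
  let "?claim_i \<and> ?claim_ii \<and> ?claim_iii \<and> ?claim_iv \<and> ?claim_v" = ?thesis
  have ?claim_i using rca_compliant[OF assms(2)] by blast
  moreover have ?claim_ii
    using rca_pivot_nonzero[OF assms(2)] rca_below_diagonal[OF assms(2)] by blast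
  moreover have ?claim_iii using rca_marked_rows_vanish[OF assms(2)] by blast
  moreover have ?claim_iv using rca_pivot_structure(1)[OF assms(2)] by blast
  moreover have ?claim_v using rca_pivot_structure(2)[OF assms(2)] by blast
  ultimately show ?thesis by (intro conjI)
qed

end
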